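(* Assume $\rho_1,\rho_2$ are strictly positive, $\rho_1(s,a)=\rho_1^{\mathcal S}(s)\pi_{b1}(a\mid s)$, $\gamma_1,\gamma_2\in[0,1)$, $\beta\ge0$, and $\|q_1^\star\|_\infty\le B_{Q1}$, $\|q_2^\star\|_\infty\le B_{Q2}$, $\|d^{P_2}_{\pi_2^\star,\rho_2}/\rho_2\|_\infty\le\kappa_2$, $\|d^{P_1}_{\mu,\rho_1}/\rho_1\|_\infty\le\kappa_1$, $\|d^{P_2}_{\pi_2^\star,\rho_2}/\rho_1\|_\infty\le\kappa_{12}$, $\|\mu/\pi_{b1}\|_\infty\le\kappa_{\mu\mid\pi_{b1}}$, $\|d^{P_2,\mathcal S}_{\pi_2^\star,\rho_2}/\rho_1^{\mathcal S}\|_\infty\le\kappa^{\mathcal S}_{12}$. Let $l_2^\star$, $l_{1,\rm mod}^\star$, $l_{1,\rm coup}^\star$ be the functions satisfying, for all $h$, $\langle l_2^\star,(I-\gamma_2P_2^{\pi_2^\star})h\rangle_{\rho_2}=\langle q_2^\star,h\rangle_{\rho_2}$; $\langle l_{1,\rm mod}^\star,(I-\gamma_1P_1^\mu)h\rangle_{\rho_1}=\langle q_1^\star,h\rangle_{\rho_1}$; $\langle l_{1,\rm coup}^\star,(I-\gamma_1P_1^\mu)h\rangle_{\rho_1}=\beta\langle q_1^\star,h\rangle_{\rho_1}+\langle l_2^\star,(I-\Pi_\mu)h\rangle_{\rho_2}$. Then these are uniquely determined and $$l_2^\star=\frac{(I-\gamma_2(P_2^{\pi_2^\star})^\top)^{-1}(\rho_2\odot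 q_2^\star)}{\rho_2},\quad l_{1,\rm mod}^\star=\frac{(I-\gamma_1(P_1^\mu)^\top)^{-1}(\rho_1\odot q_1^\star)}{\rho_1},$$ $$l_{1,\rm coup}^\star=\beta l_{1,\rm mod}^\star+l_{1,\rm cross}^\star,\qquad l_{1,\rm cross}^\star=\frac{(I-\gamma_1(P_1^\mu)^\top)^{-1}(I-\Pi_\mu)^\top(\rho_2\odot l_2^\star)}{\rho_1}.$$ Consequently $\|l_2^\star\|_\infty\le\frac{\kappa_2}{1-\gamma_2}B_{Q2}$, $\|l_{1,\rm mod}^\star\|_\infty\le\frac{\kappa_1}{1-\gamma_1}B_{Q1}$, and $$\|l_{1,\rm coup}^\star\|_\infty\le\beta\frac{\kappa_1}{1-\gamma_1}B_{Q1}+\frac{\kappa_1(\kappa_{12}+\kappa_{\mu\mid\pi_{b1}}\kappa_{12}^{\mathcal S})}{(1-\gamma_1)(1-\gamma_2)}B_{Q2}.$$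
   Context: Setup: $\mathcal S,\mathcal A$ finite; functions/measures on $\mathcal S\times\mathcal A$ are vectors; $\odot$ and division are pointwise; $K^\top$ denotes the transpose (Euclidean adjoint) of a linear operator $K$, acting on measures. $\langle f,h\rangle_\rho=\sum\rho fh$. $\rho_1,\rho_2$ are probability distributions on $\mathcal S\times\mathcal A$, $\rho_1^{\mathcal S}$ a distribution on $\mathcal S$, $\pi_{b1}$ a policy. $P_1,P_2$ transition kernels; $\mu$ anchor policy; $(\Pi_\mu q)(s,a)=\sum_{a'}\mu(a'\mid s)q(s,a')$; $(P_1^\mu q)(s,a)=\sum_{s'}P_1(s'\mid s,a)\sum_{a'}\mu(a'\mid s')q(s',a')$; $(P_2^\pi h)(s,a)=\sum_{s'}P_2(s'\mid s,a)\sum_{a'}\pi(a'\mid s')h(s',a')$. $q_1^\star,q_2^\star$ are given functions on $\mathcal S\times\mathcal A$ and $\pi_2^\star$ a given policy. Occupancies (state-action initial distribution): $d^{P_2}_{\pi,\rho_2}:=(1-\gamma_2)\sum_{t\ge0}\gamma_2^t((P_2^{\pi})^\top)^t\rho_2$, $d^{P_1}_{\mu,\rho_1}:=(1-\gamma_1)\sum_{t\ge0}\gamma_1^t((P_1^\mu)^\top)^t\rho_1$, and $d^{P_2,\mathcal S}_{\pi,\rho_2}(s):=\sum_a d^{P_2}_{\pi,\rho_2}(s,a)$. *)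

theory Defs
  imports "HOL-Analysis.Analysis"
begin

text \<open>Functions and measures on S x A
  are real-valued functions on 's \<times> 'a. Policies: 's \<Rightarrow> 'a \<Rightarrow> real (pol s a = pol(a|s)).
  Transition kernels: 's \<times> 'a \<Rightarrow> 's \<Rightarrow> real (P (s,a) s' = P(s'|s,a)).\<close>

definition is_dist :: "('x::finite \<Rightarrow> real) \<Rightarrow> bool" where
  "is_dist p \<longleftrightarrow> (\<forall>x. 0 \<le> p x) \<and> sum p UNIV = 1"

definition is_policy :: "('s \<Rightarrow> 'a::finite \<Rightarrow> real) \<Rightarrow> bool" where
  "is_policy pol \<longleftrightarrow> (\<forall>s. is_dist (pol s))"

definition is_kernel :: "('s \<times> 'a \<Rightarrow> 's::finite \<Rightarrow> real) \<Rightarrow> bool" where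
  "is_kernel P \<longleftrightarrow> (\<forall>sa. is_dist (P sa))"

definition Pi_op :: "('s \<Rightarrow> 'a::finite \<Rightarrow> real) \<Rightarrow> ('s \<times> 'a \<Rightarrow> real) \<Rightarrow> ('s \<times> 'a \<Rightarrow> real)" where
  "Pi_op mu q = (\<lambda>(s,a). \<Sum>a'\<in>UNIV. mu s a' * q (s,a'))"

definition P_op :: "('s \<times> 'a \<Rightarrow> 's::finite \<Rightarrow> real) \<Rightarrow> ('s \<Rightarrow> 'a::finite \<Rightarrow> real)
    \<Rightarrow> ('s \<times> 'a \<Rightarrow> real) \<Rightarrow> ('s \<times> 'a \<Rightarrow> real)" where
  "P_op P pol h = (\<lambda>sa. \<Sum>s'\<in>UNIV. P sa s' * (\<Sum>a'\<in>UNIV. pol s' a' * h (s',a')))"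

definition ip :: "('x::finite \<Rightarrow> real) \<Rightarrow> ('x \<Rightarrow> real) \<Rightarrow> ('x \<Rightarrow> real) \<Rightarrow> real" where
  "ip rho f h = (\<Sum>x\<in>UNIV. rho x * f x * h x)"

definition sup_norm :: "('x::finite \<Rightarrow> real) \<Rightarrow> real" where
  "sup_norm f = Max (range (\<lambda>x. \<bar>f x\<bar>))"

text \<open>Euclidean transpose (adjoint) of a linear operator K on functions on a finite set,
  acting on measures: (K^T m)(y) = sum_x m(x) (K e_y)(x).\<close>
definition transp :: "(('x::finite \<Rightarrow> real) \<Rightarrow> ('x \<Rightarrow> real)) \<Rightarrow> ('x \<Rightarrow> real) \<Rightarrow> ('x \<Rightarrow> real)" where
  "transp K m = (\<lambda>y. \<Sum>x\<in>UNIV. m x * K (\<lambda>z. if z = y then 1 else 0) x)"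

definition occ :: "real \<Rightarrow> (('x::finite \<Rightarrow> real) \<Rightarrow> ('x \<Rightarrow> real)) \<Rightarrow> ('x \<Rightarrow> real) \<Rightarrow> ('x \<Rightarrow> real)" where
  "occ gamma K rho = (\<lambda>x. (1 - gamma) * (\<Sum>t. gamma ^ t * ((transp K ^^ t) rho) x))"

definition marg :: "('s \<times> 'a::finite \<Rightarrow> real) \<Rightarrow> 's \<Rightarrow> real" where
  "marg d s = (\<Sum>a\<in>UNIV. d (s,a))"

text \<open>(I - gamma K^T)^{-1} v, as the unique solution w of w - gamma K^T w = v.\<close>
definition resolvent :: "real \<Rightarrow> (('x::finite \<Rightarrow> real) \<Rightarrow> ('x \<Rightarrow> real)) \<Rightarrow> ('x \<Rightarrow> real) \<Rightarrow> ('x \<Rightarrow> real)" where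
  "resolvent gamma K v = (THE w. (\<lambda>x. w x - gamma * transp K w x) = v)"

end

theory Submission
  imports Defs
begin

(* Writing P^pi as the stochastic matrix (s,a) -> (s',a') with entries P(s'|s,a) pi(a'|s'),
   its transpose does not increase l1-norms. The weak equation
   <l, (I - gamma K) h>_rho = <c, h> for all h says exactly that w = rho * l solves
   w - gamma K^T w = c, and for gamma < 1 this has the unique solution
   w = sum_t gamma^t (K^T)^t c, uniqueness coming from the l1-contraction.
   The series is monotone in c, so |c| <= C rho gives |w| <= C d / (1 - gamma) with d the
   occupancy of rho; dividing by rho and using d / rho <= kappa yields the sup-norm bounds.
   The coupled equation is linear in its right-hand side; its cross part has density
   m - mu(a|s) sum_a' m(s,a') with m = rho2 l2 and |m| <= BQ2 d2 / (1 - gamma2), which is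
   dominated by kappa12 rho1 and, through mu <= kappa_mu pi_b1 and rho1 = rho1S pi_b1,
   by kappa_mu kappa12S rho1. *)

definition mat_op :: "('x::finite \<Rightarrow> 'x \<Rightarrow> real) \<Rightarrow> ('x \<Rightarrow> real) \<Rightarrow> ('x \<Rightarrow> real)" where
  "mat_op M h = (\<lambda>x. \<Sum>y\<in>UNIV. M x y * h y)"

definition stochastic :: "('x::finite \<Rightarrow> 'x \<Rightarrow> real) \<Rightarrow> bool" where
  "stochastic M \<longleftrightarrow> (\<forall>x y. 0 \<le> M x y) \<and> (\<forall>x. sum (M x) UNIV = 1)"

definition neumann_series ::
    "real \<Rightarrow> (('x \<Rightarrow> real) \<Rightarrow> ('x \<Rightarrow> real)) \<Rightarrow> ('x \<Rightarrow> real) \<Rightarrow> ('x \<Rightarrow> real)" where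
  "neumann_series g T v = (\<lambda>x. \<Sum>t. g ^ t * (T ^^ t) v x)"

lemma transp_mat_op: "transp (mat_op M) m y = (\<Sum>x\<in>UNIV. m x * M x y)"
  unfolding transp_def mat_op_def by (simp add: if_distrib cong: if_cong)

lemma transp_lincomb:
  "transp K (\<lambda>x. a * u x + b * v x) = (\<lambda>y. a * transp K u y + b * transp K v y)"
  unfolding transp_def by (auto simp: algebra_simps sum.distrib sum_distrib_left)

lemma sum_abs_transp_le:
  assumes "stochastic M"
  shows "(\<Sum>y\<in>UNIV. \<bar>transp (mat_op M) m y\<bar>) \<le> (\<Sum>x\<in>UNIV. \<bar>m x\<bar>)"
proof -
  have "\<bar>transp (mat_op M) m y\<bar> \<le> (\<Sum>x\<in>UNIV. \<bar>m x\<bar> * M x y)" for y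
    unfolding transp_mat_op
    using sum_abs[of "\<lambda>x. m x * M x y" UNIV] assms by (simp add: stochastic_def abs_mult)
  then have "(\<Sum>y\<in>UNIV. \<bar>transp (mat_op M) m y\<bar>) \<le> (\<Sum>y\<in>UNIV. \<Sum>x\<in>UNIV. \<bar>m x\<bar> * M x y)"
    by (rule sum_mono)
  also have "\<dots> = (\<Sum>x\<in>UNIV. \<bar>m x\<bar> * sum (M x) UNIV)"
    by (subst sum.swap) (simp add: sum_distrib_left)
  also have "\<dots> = (\<Sum>x\<in>UNIV. \<bar>m x\<bar>)"
    using assms by (simp add: stochastic_def)
  finally show ?thesis .
qed

lemma abs_transp_power_le:
  assumes "stochastic M"
  shows "\<bar>(transp (mat_op M) ^^ t) m y\<bar> \<le> (\<Sum>x\<in>UNIV. \<bar>m x\<bar>)"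
proof -
  have "(\<Sum>y\<in>UNIV. \<bar>(transp (mat_op M) ^^ t) m y\<bar>) \<le> (\<Sum>x\<in>UNIV. \<bar>m x\<bar>)"
    by (induction t) (auto intro: order_trans[OF sum_abs_transp_le[OF assms]])
  moreover have "\<bar>(transp (mat_op M) ^^ t) m y\<bar> \<le> (\<Sum>y\<in>UNIV. \<bar>(transp (mat_op M) ^^ t) m y\<bar>)"
    by (rule member_le_sum) simp_all
  ultimately show ?thesis
    by linarith
qed

lemma transp_mono:
  assumes "stochastic M" "\<And>x. u x \<le> v x"
  shows "transp (mat_op M) u y \<le> transp (mat_op M) v y"
  unfolding transp_mat_op using assms
  by (auto simp: stochastic_def intro!: sum_mono mult_right_mono)

lemma summable_neumann_series:
  assumes "stochastic M" "0 \<le> g" "g < 1"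
  shows "summable (\<lambda>t. g ^ t * (transp (mat_op M) ^^ t) m y)"
proof (rule summable_comparison_test')
  show "summable (\<lambda>t. g ^ t * (\<Sum>x\<in>UNIV. \<bar>m x\<bar>))"
    using assms by (intro summable_mult2) simp
  show "norm (g ^ t * (transp (mat_op M) ^^ t) m y) \<le> g ^ t * (\<Sum>x\<in>UNIV. \<bar>m x\<bar>)" for t
    using abs_transp_power_le[OF assms(1), of t m y] assms(2)
    by (simp add: abs_mult mult_left_mono)
qed

lemma neumann_series_solves:
  assumes M: "stochastic M" and g: "0 \<le> g" "g < 1"
  shows "(\<lambda>x. neumann_series g (transp (mat_op M)) v x
            - g * transp (mat_op M) (neumann_series g (transp (mat_op M)) v) x) = v"
proof
  fix y
  let ?T = "transp (mat_op M)" and ?w = "neumann_series g (transp (mat_op M)) v"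
  have shifted: "?T ?w y = (\<Sum>t. g ^ t * (?T ^^ Suc t) v y)"
  proof -
    have "?T ?w y = (\<Sum>x\<in>UNIV. ?w x * M x y)"
      by (rule transp_mat_op)
    also have "\<dots> = (\<Sum>x\<in>UNIV. \<Sum>t. g ^ t * (?T ^^ t) v x * M x y)"
      unfolding neumann_series_def
      by (intro sum.cong refl suminf_mult2 summable_neumann_series[OF M g])
    also have "\<dots> = (\<Sum>t. \<Sum>x\<in>UNIV. g ^ t * (?T ^^ t) v x * M x y)"
      by (intro suminf_sum[symmetric] summable_mult2 summable_neumann_series[OF M g])
    also have "\<dots> = (\<Sum>t. g ^ t * (?T ^^ Suc t) v y)"
      by (simp add: transp_mat_op sum_distrib_left mult.assoc)
    finally show ?thesis .
  qed
  have "summable (\<lambda>t. g ^ t * (?T ^^ Suc t) v y)"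
    using summable_neumann_series[OF M g, of "?T v" y] by (simp add: funpow_swap1)
  then have "g * ?T ?w y = (\<Sum>t. g ^ Suc t * (?T ^^ Suc t) v y)"
    unfolding shifted by (simp add: suminf_mult[symmetric] mult.assoc)
  also have "\<dots> = ?w y - v y"
    using suminf_split_head[OF summable_neumann_series[OF M g, of v y]]
    by (simp add: neumann_series_def)
  finally show "?w y - g * ?T ?w y = v y" by simp
qed

lemma transp_fixed_point_eq_0:
  assumes M: "stochastic M" and g: "0 \<le> g" "g < 1"
    and fix_w: "\<And>x. w x = g * transp (mat_op M) w x"
  shows "w x = 0"
proof -
  have "(\<Sum>x\<in>UNIV. \<bar>w x\<bar>) = g * (\<Sum>x\<in>UNIV. \<bar>transp (mat_op M) w x\<bar>)"
    using g by (subst fix_w) (simp add: abs_mult sum_distrib_left)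
  also have "\<dots> \<le> g * (\<Sum>x\<in>UNIV. \<bar>w x\<bar>)"
    by (rule mult_left_mono[OF sum_abs_transp_le[OF M] g(1)])
  finally have "(1 - g) * (\<Sum>x\<in>UNIV. \<bar>w x\<bar>) \<le> 0"
    by (simp add: algebra_simps)
  with g have "(\<Sum>x\<in>UNIV. \<bar>w x\<bar>) \<le> 0"
    by (simp add: mult_le_0_iff)
  then show ?thesis
    using sum_nonneg_eq_0_iff[of UNIV "\<lambda>x. \<bar>w x\<bar>"] by (simp add: order_antisym sum_nonneg)
qed

lemma resolvent_equation_unique:
  assumes M: "stochastic M" and g: "0 \<le> g" "g < 1"
    and w1: "(\<lambda>x. w1 x - g * transp (mat_op M) w1 x) = v"
    and w2: "(\<lambda>x. w2 x - g * transp (mat_op M) w2 x) = v"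
  shows "w1 = w2"
proof
  fix x
  let ?T = "transp (mat_op M)"
  have diff: "?T (\<lambda>x. w1 x - w2 x) y = ?T w1 y - ?T w2 y" for y
    using transp_lincomb[of "mat_op M" 1 w1 "-1" w2] by (simp add: fun_eq_iff)
  have same_source: "w1 y - g * ?T w1 y = w2 y - g * ?T w2 y" for y
    using w1 w2 by (simp add: fun_eq_iff)
  have "w1 y - w2 y = g * ?T (\<lambda>x. w1 x - w2 x) y" for y
    using same_source[of y] unfolding diff right_diff_distrib by linarith
  from transp_fixed_point_eq_0[OF M g, of "\<lambda>x. w1 x - w2 x", OF this]
  show "w1 x = w2 x" by simp
qed

lemma resolvent_eq_neumann_series:
  assumes "stochastic M" "0 \<le> g" "g < 1"
  shows "resolvent g (mat_op M) v = neumann_series g (transp (mat_op M)) v"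
  unfolding resolvent_def
  by (intro the_equality neumann_series_solves[OF assms])
    (rule resolvent_equation_unique[OF assms _ neumann_series_solves[OF assms]])

lemma resolvent_iff:
  assumes "stochastic M" "0 \<le> g" "g < 1"
  shows "(\<lambda>x. w x - g * transp (mat_op M) w x) = v \<longleftrightarrow> w = resolvent g (mat_op M) v"
  using resolvent_equation_unique[OF assms _ neumann_series_solves[OF assms]]
    neumann_series_solves[OF assms]
  unfolding resolvent_eq_neumann_series[OF assms] by blast

lemma resolvent_lincomb:
  assumes "stochastic M" "0 \<le> g" "g < 1"
  shows "resolvent g (mat_op M) (\<lambda>x. a * u x + b * v x)
    = (\<lambda>x. a * resolvent g (mat_op M) u x + b * resolvent g (mat_op M) v x)"
proof -
  let ?R = "resolvent g (mat_op M)" and ?T = "transp (mat_op M)"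
  have solves: "?R f x - g * ?T (?R f) x = f x" for f x
    using resolvent_iff[OF assms, of "?R f" f] by (simp add: fun_eq_iff)
  have "a * ?R u x + b * ?R v x - g * (a * ?T (?R u) x + b * ?T (?R v) x)
      = a * (?R u x - g * ?T (?R u) x) + b * (?R v x - g * ?T (?R v) x)" for x
    by (simp add: algebra_simps)
  then have "(\<lambda>x. a * ?R u x + b * ?R v x - g * ?T (\<lambda>x. a * ?R u x + b * ?R v x) x)
      = (\<lambda>x. a * u x + b * v x)"
    unfolding transp_lincomb by (simp only: solves)
  then show ?thesis
    unfolding resolvent_iff[OF assms] by simp
qed

lemma resolvent_mono:
  assumes "stochastic M" "0 \<le> g" "g < 1" "\<And>x. u x \<le> v x"
  shows "resolvent g (mat_op M) u y \<le> resolvent g (mat_op M) v y"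
proof -
  have "(transp (mat_op M) ^^ t) u y \<le> (transp (mat_op M) ^^ t) v y" for t
    using assms(4) by (induction t arbitrary: y) (auto intro: transp_mono[OF assms(1)])
  then show ?thesis
    unfolding resolvent_eq_neumann_series[OF assms(1-3)] neumann_series_def
    using assms(2) by (intro suminf_le summable_neumann_series[OF assms(1-3)] mult_left_mono) auto
qed

lemma abs_resolvent_le:
  assumes "stochastic M" "0 \<le> g" "g < 1" "\<And>x. \<bar>v x\<bar> \<le> c * rho x"
  shows "\<bar>resolvent g (mat_op M) v x\<bar> \<le> c * resolvent g (mat_op M) rho x"
proof -
  have scale: "resolvent g (mat_op M) (\<lambda>x. a * f x) = (\<lambda>x. a * resolvent g (mat_op M) f x)" for a f
    using resolvent_lincomb[OF assms(1-3), of a f 0 f] by simp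
  have "resolvent g (mat_op M) (\<lambda>x. s * v x) x \<le> resolvent g (mat_op M) (\<lambda>x. c * rho x) x"
    if "s = 1 \<or> s = -1" for s
    using assms(4) that by (intro resolvent_mono[OF assms(1-3)]) (auto simp: abs_le_iff)
  from this[of 1] this[of "-1"] show ?thesis
    unfolding scale by (simp add: abs_le_iff)
qed

lemma resolvent_eq_occ:
  assumes "stochastic M" "0 \<le> g" "g < 1"
  shows "resolvent g (mat_op M) rho x = occ g (mat_op M) rho x / (1 - g)"
  using assms by (simp add: resolvent_eq_neumann_series occ_def neumann_series_def)

lemma abs_resolvent_le_occ:
  assumes M: "stochastic M" and g: "0 \<le> g" "g < 1" and v: "\<And>x. \<bar>v x\<bar> \<le> c * rho x"
  shows "\<bar>resolvent g (mat_op M) v x\<bar> \<le> c / (1 - g) * occ g (mat_op M) rho x"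
  using abs_resolvent_le[OF M g v] by (simp add: resolvent_eq_occ[OF M g])

lemma sum_mult_test_eq_iff:
  fixes f g :: "'x::finite \<Rightarrow> real"
  shows "(\<forall>h. (\<Sum>y\<in>UNIV. f y * h y) = (\<Sum>y\<in>UNIV. g y * h y)) \<longleftrightarrow> f = g"
proof
  assume "\<forall>h. (\<Sum>y\<in>UNIV. f y * h y) = (\<Sum>y\<in>UNIV. g y * h y)"
  from this[rule_format, of "\<lambda>y. if y = z then 1 else 0" for z] show "f = g"
    by (simp add: if_distrib fun_eq_iff cong: if_cong)
qed simp

lemma ip_eq_sum: "ip rho q h = (\<Sum>y\<in>UNIV. (rho y * q y) * h y)"
  unfolding ip_def ..

lemma ip_mat_op:
  "ip rho l (mat_op M h) = (\<Sum>y\<in>UNIV. transp (mat_op M) (\<lambda>x. rho x * l x) y * h y)"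
  unfolding ip_def mat_op_def transp_mat_op sum_distrib_left sum_distrib_right
  by (subst sum.swap) (simp add: mult_ac)

lemma adjoint_equation_iff:
  assumes M: "stochastic M" and g: "0 \<le> g" "g < 1" and rho: "\<forall>x. 0 < rho x"
  shows "(\<forall>h. ip rho l (\<lambda>x. h x - g * mat_op M h x) = (\<Sum>y\<in>UNIV. c y * h y))
     \<longleftrightarrow> l = (\<lambda>x. resolvent g (mat_op M) c x / rho x)"
proof -
  let ?w = "\<lambda>x. rho x * l x"
  have "ip rho l (\<lambda>x. h x - g * mat_op M h x) = ip rho l h - g * ip rho l (mat_op M h)" for h
    unfolding ip_def by (simp add: algebra_simps sum_subtractf sum_distrib_left)
  also have "\<dots> h = (\<Sum>y\<in>UNIV. (?w y - g * transp (mat_op M) ?w y) * h y)" for h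
    unfolding ip_mat_op by (simp add: ip_def algebra_simps sum_subtractf sum_distrib_left)
  finally have "(\<forall>h. ip rho l (\<lambda>x. h x - g * mat_op M h x) = (\<Sum>y\<in>UNIV. c y * h y))
      \<longleftrightarrow> (\<lambda>y. ?w y - g * transp (mat_op M) ?w y) = c"
    by (simp only: sum_mult_test_eq_iff)
  also have "\<dots> \<longleftrightarrow> ?w = resolvent g (mat_op M) c"
    by (rule resolvent_iff[OF M g])
  also have "\<dots> \<longleftrightarrow> l = (\<lambda>x. resolvent g (mat_op M) c x / rho x)"
    using rho by (auto simp: fun_eq_iff field_simps less_imp_neq[symmetric])
  finally show ?thesis .
qed

lemma coupled_adjoint_equation_iff:
  assumes M: "stochastic M" and g: "0 \<le> g" "g < 1" and rho: "\<forall>x. 0 < rho x"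
  shows "(\<forall>h. ip rho l (\<lambda>x. h x - g * mat_op M h x) = b * ip rho q h + ip rho' l' (mat_op A h))
     \<longleftrightarrow> l = (\<lambda>x. b * (resolvent g (mat_op M) (\<lambda>y. rho y * q y) x / rho x)
        + resolvent g (mat_op M) (transp (mat_op A) (\<lambda>y. rho' y * l' y)) x / rho x)"
proof -
  let ?c = "\<lambda>y. b * (rho y * q y) + 1 * transp (mat_op A) (\<lambda>y. rho' y * l' y) y"
  have "b * ip rho q h + ip rho' l' (mat_op A h) = (\<Sum>y\<in>UNIV. ?c y * h y)" for h
    unfolding ip_mat_op ip_eq_sum[of rho q] by (simp add: algebra_simps sum.distrib sum_distrib_left)
  moreover have "(\<lambda>x. resolvent g (mat_op M) ?c x / rho x)
      = (\<lambda>x. b * (resolvent g (mat_op M) (\<lambda>y. rho y * q y) x / rho x)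
        + resolvent g (mat_op M) (transp (mat_op A) (\<lambda>y. rho' y * l' y)) x / rho x)"
    unfolding resolvent_lincomb[OF M g] by (simp add: add_divide_distrib)
  ultimately show ?thesis
    using adjoint_equation_iff[OF M g rho, of l ?c] by simp
qed

lemma abs_le_sup_norm: "\<bar>f x\<bar> \<le> sup_norm f"
  unfolding sup_norm_def by (rule Max_ge) auto

lemma sup_norm_leI: "(\<And>x. \<bar>f x\<bar> \<le> c) \<Longrightarrow> sup_norm f \<le> c"
  unfolding sup_norm_def by (rule Max.boundedI) auto

lemma sup_norm_nonneg: "0 \<le> sup_norm f"
  using abs_le_sup_norm[of f undefined] by linarith

lemma le_mult_if_sup_norm_div_le:
  assumes "sup_norm (\<lambda>x. f x / r x) \<le> k" "0 < r x"
  shows "f x \<le> k * r x"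
proof -
  have "f x / r x \<le> k"
    using abs_le_sup_norm[of "\<lambda>x. f x / r x" x] assms(1) by linarith
  then show ?thesis using assms(2) by (simp add: pos_divide_le_eq)
qed

lemma abs_mult_le_sup_norm:
  assumes "sup_norm q \<le> B" "\<forall>x. 0 < rho x"
  shows "\<bar>rho x * q x\<bar> \<le> B * rho x"
proof -
  have "0 \<le> rho x" using assms(2) by (simp add: less_imp_le)
  then show ?thesis
    using mult_left_mono[OF order_trans[OF abs_le_sup_norm assms(1)], of "rho x" x]
    by (simp add: abs_mult mult.commute)
qed

lemma sup_norm_scaled_add_le:
  assumes "0 \<le> a"
  shows "sup_norm (\<lambda>x. a * f x + g x) \<le> a * sup_norm f + sup_norm g"
proof (rule sup_norm_leI)
  fix x
  have "\<bar>a * f x + g x\<bar> \<le> a * \<bar>f x\<bar> + \<bar>g x\<bar>"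
    using assms abs_triangle_ineq[of "a * f x" "g x"] by (simp add: abs_mult)
  also have "\<dots> \<le> a * sup_norm f + sup_norm g"
    using assms by (intro add_mono mult_left_mono abs_le_sup_norm)
  finally show "\<bar>a * f x + g x\<bar> \<le> a * sup_norm f + sup_norm g" .
qed

lemma sup_norm_resolvent_div_le:
  assumes M: "stochastic M" and g: "0 \<le> g" "g < 1" and rho: "\<forall>x. 0 < rho x"
    and v: "\<And>x. \<bar>v x\<bar> \<le> c * rho x"
    and k: "sup_norm (\<lambda>x. occ g (mat_op M) rho x / rho x) \<le> k"
  shows "sup_norm (\<lambda>x. resolvent g (mat_op M) v x / rho x) \<le> k / (1 - g) * c"
proof (rule sup_norm_leI)
  fix x
  have rho_x: "0 < rho x" using rho by blast
  have c: "0 \<le> c"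
    using order_trans[OF abs_ge_zero v[of x]] rho_x by (simp add: zero_le_mult_iff)
  have "\<bar>resolvent g (mat_op M) v x\<bar> \<le> c * (occ g (mat_op M) rho x / (1 - g))"
    using abs_resolvent_le_occ[OF M g v] by simp
  also have "\<dots> \<le> c * (k * rho x / (1 - g))"
    using le_mult_if_sup_norm_div_le[OF k rho_x] c g by (intro mult_left_mono divide_right_mono) auto
  finally show "\<bar>resolvent g (mat_op M) v x / rho x\<bar> \<le> k / (1 - g) * c"
    using rho_x by (simp add: pos_divide_le_eq mult_ac)
qed

lemma sum_UNIV_pair: "(\<Sum>x\<in>UNIV. f x) = (\<Sum>s\<in>UNIV. \<Sum>a\<in>UNIV. f (s, a))"
  for f :: "'s::finite \<times> 'a::finite \<Rightarrow> 'b::comm_monoid_add"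
  by (simp add: sum.cartesian_product)

definition sa_kernel ::
    "('s \<times> 'a \<Rightarrow> 's::finite \<Rightarrow> real) \<Rightarrow> ('s \<Rightarrow> 'a::finite \<Rightarrow> real) \<Rightarrow> 's \<times> 'a \<Rightarrow> 's \<times> 'a \<Rightarrow> real"
  where "sa_kernel P pol x y = P x (fst y) * pol (fst y) (snd y)"

lemma P_op_eq_mat_op: "P_op P pol = mat_op (sa_kernel P pol)"
  unfolding P_op_def mat_op_def sa_kernel_def
  by (subst sum_UNIV_pair) (simp add: sum_distrib_left mult.assoc)

lemma stochastic_sa_kernel: "is_kernel P \<Longrightarrow> is_policy pol \<Longrightarrow> stochastic (sa_kernel P pol)"
  unfolding stochastic_def sa_kernel_def is_kernel_def is_policy_def is_dist_def
  by (auto simp: sum_UNIV_pair sum_distrib_left[symmetric])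

lemma sum_UNIV_fst_eq:
  fixes f :: "'s::finite \<times> 'a::finite \<Rightarrow> 'b::comm_monoid_add"
  shows "(\<Sum>x\<in>UNIV. if fst x = s then f x else 0) = (\<Sum>a\<in>UNIV. f (s, a))"
proof -
  have fiber: "{x. fst x = s} = range (Pair s)"
    by auto
  have "(\<Sum>x\<in>UNIV. if fst x = s then f x else 0) = sum f {x. fst x = s}"
    using sum.inter_filter[of UNIV f "\<lambda>x. fst x = s"] by simp
  also have "\<dots> = sum f (range (Pair s))"
    unfolding fiber ..
  also have "\<dots> = (\<Sum>a\<in>UNIV. f (s, a))"
    by (simp add: sum.reindex inj_on_def)
  finally show ?thesis .
qed

definition id_minus_Pi_mat :: "('s::finite \<Rightarrow> 'a::finite \<Rightarrow> real) \<Rightarrow> 's \<times> 'a \<Rightarrow> 's \<times> 'a \<Rightarrow> real"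
  where "id_minus_Pi_mat mu x y =
    (if x = y then 1 else 0) - (if fst y = fst x then mu (fst y) (snd y) else 0)"

lemma id_minus_Pi_op_eq_mat_op:
  fixes mu :: "'s::finite \<Rightarrow> 'a::finite \<Rightarrow> real"
  shows "(\<lambda>h x. h x - Pi_op mu h x) = mat_op (id_minus_Pi_mat mu)"
proof (intro ext)
  fix h :: "'s \<times> 'a \<Rightarrow> real" and x :: "'s \<times> 'a"
  have "(\<Sum>y\<in>UNIV. (if fst y = fst x then mu (fst y) (snd y) else 0) * h y)
      = (\<Sum>a\<in>UNIV. mu (fst x) a * h (fst x, a))"
    using sum_UNIV_fst_eq[of "fst x" "\<lambda>y. mu (fst y) (snd y) * h y"]
    by (simp add: if_distrib[of "\<lambda>c. c * _"] cong: if_cong)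
  then show "h x - Pi_op mu h x = mat_op (id_minus_Pi_mat mu) h x"
    unfolding mat_op_def id_minus_Pi_mat_def Pi_op_def
    by (simp add: left_diff_distrib sum_subtractf split_beta if_distrib[of "\<lambda>c. c * _"]
        cong: if_cong)
qed

lemma transp_id_minus_Pi_op:
  "transp (\<lambda>h x. h x - Pi_op mu h x) m (s, a) = m (s, a) - mu s a * marg m s"
proof -
  have "(\<Sum>x\<in>UNIV. m x * (if s = fst x then mu s a else 0)) = mu s a * marg m s"
    using sum_UNIV_fst_eq[of s "\<lambda>x. m x * mu s a"]
    by (simp add: marg_def sum_distrib_left mult_ac eq_commute[of s] if_distrib[of "\<lambda>c. _ * c"]
        cong: if_cong)
  then show ?thesis
    unfolding id_minus_Pi_op_eq_mat_op transp_mat_op id_minus_Pi_mat_def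
    by (simp add: right_diff_distrib sum_subtractf if_distrib[of "\<lambda>c. _ * c"] cong: if_cong)
qed

lemma abs_transp_id_minus_Pi_op_le:
  fixes rho1 :: "'s::finite \<times> 'a::finite \<Rightarrow> real"
  assumes rho1S: "is_dist rho1S" and pib1: "is_policy pib1" and mu: "is_policy mu"
    and rho1_pos: "\<forall>x. 0 < rho1 x" and rho1_fact: "\<forall>s a. rho1 (s, a) = rho1S s * pib1 s a"
    and m: "\<And>x. \<bar>m x\<bar> \<le> C * d x" and C: "0 \<le> C"
    and k12: "sup_norm (\<lambda>x. d x / rho1 x) \<le> k12"
    and k12S: "sup_norm (\<lambda>s. marg d s / rho1S s) \<le> k12S"
    and kmu: "sup_norm (\<lambda>(s, a). mu s a / pib1 s a) \<le> kmu"
  shows "\<bar>transp (\<lambda>h x. h x - Pi_op mu h x) m x\<bar> \<le> C * (k12 + kmu * k12S) * rho1 x"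
proof -
  obtain s a where x: "x = (s, a)" by fastforce
  have "0 < rho1S s * pib1 s a" "0 \<le> rho1S s" "0 \<le> pib1 s a"
    using rho1_pos rho1_fact rho1S pib1 by (auto simp: is_dist_def is_policy_def)
  then have pos: "0 < rho1S s" "0 < pib1 s a"
    by (auto simp: zero_less_mult_iff)
  have mu_nonneg: "0 \<le> mu s a"
    using mu by (simp add: is_policy_def is_dist_def)
  have mu_le: "mu s a \<le> kmu * pib1 s a"
    using le_mult_if_sup_norm_div_le[of "\<lambda>x. mu (fst x) (snd x)" "\<lambda>x. pib1 (fst x) (snd x)"
        kmu "(s, a)"] kmu pos
    by (simp add: case_prod_unfold)
  have d_le: "d x \<le> k12 * rho1 x"
    using k12 rho1_pos[rule_format, of x] by (rule le_mult_if_sup_norm_div_le)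
  have marg_d_le: "marg d s \<le> k12S * rho1S s"
    using k12S pos(1) by (rule le_mult_if_sup_norm_div_le)
  have marg_m: "\<bar>marg m s\<bar> \<le> C * marg d s"
    unfolding marg_def sum_distrib_left
    by (rule order_trans[OF sum_abs sum_mono[OF m]])
  have "\<bar>transp (\<lambda>h x. h x - Pi_op mu h x) m x\<bar> \<le> \<bar>m x\<bar> + mu s a * \<bar>marg m s\<bar>"
    unfolding x transp_id_minus_Pi_op using mu_nonneg
    by (metis abs_mult abs_of_nonneg abs_triangle_ineq4)
  also have "\<dots> \<le> C * (k12 * rho1 x) + kmu * pib1 s a * (C * (k12S * rho1S s))"
  proof (rule add_mono)
    show "\<bar>m x\<bar> \<le> C * (k12 * rho1 x)"
      using m[of x] mult_left_mono[OF d_le C] by linarith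
    have "\<bar>marg m s\<bar> \<le> C * (k12S * rho1S s)"
      using marg_m mult_left_mono[OF marg_d_le C] by linarith
    then show "mu s a * \<bar>marg m s\<bar> \<le> kmu * pib1 s a * (C * (k12S * rho1S s))"
      using mu_nonneg mu_le by (meson abs_ge_zero mult_mono order_trans)
  qed
  also have "\<dots> = C * (k12 + kmu * k12S) * rho1 x"
    using rho1_fact by (simp add: x algebra_simps)
  finally show ?thesis .
qed

lemma abs_cross_source_le:
  assumes P2: "is_kernel P2" and pi2: "is_policy pi2" and g2: "0 \<le> g2" "g2 < 1"
    and rho2: "\<forall>x. 0 < rho2 x" and q2: "sup_norm q2 \<le> BQ2"
    and rho1S: "is_dist rho1S" and pib1: "is_policy pib1" and mu: "is_policy mu"
    and rho1: "\<forall>x. 0 < rho1 x" and rho1_fact: "\<forall>s a. rho1 (s, a) = rho1S s * pib1 s a"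
    and k12: "sup_norm (\<lambda>x. occ g2 (P_op P2 pi2) rho2 x / rho1 x) \<le> k12"
    and k12S: "sup_norm (\<lambda>s. marg (occ g2 (P_op P2 pi2) rho2) s / rho1S s) \<le> k12S"
    and kmu: "sup_norm (\<lambda>(s, a). mu s a / pib1 s a) \<le> kmu"
  shows "\<bar>transp (\<lambda>h x. h x - Pi_op mu h x) (resolvent g2 (P_op P2 pi2) (\<lambda>y. rho2 y * q2 y)) x\<bar>
    \<le> BQ2 / (1 - g2) * (k12 + kmu * k12S) * rho1 x"
proof (rule abs_transp_id_minus_Pi_op_le[OF rho1S pib1 mu rho1 rho1_fact _ _ k12 k12S kmu])
  show "\<bar>resolvent g2 (P_op P2 pi2) (\<lambda>y. rho2 y * q2 y) y\<bar>
      \<le> BQ2 / (1 - g2) * occ g2 (P_op P2 pi2) rho2 y" for y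
    using abs_resolvent_le_occ[OF stochastic_sa_kernel[OF P2 pi2] g2 abs_mult_le_sup_norm[OF q2 rho2]]
    unfolding P_op_eq_mat_op .
  show "0 \<le> BQ2 / (1 - g2)"
    using sup_norm_nonneg[of q2] q2 g2 by simp
qed

theorem proposition3p4:
  fixes rho1 rho2 :: "'s::finite \<times> 'a::finite \<Rightarrow> real"
    and rho1S :: "'s \<Rightarrow> real"
    and pib1 mu pi2 :: "'s \<Rightarrow> 'a \<Rightarrow> real"
    and P1 P2 :: "'s \<times> 'a \<Rightarrow> 's \<Rightarrow> real"
    and q1 q2 :: "'s \<times> 'a \<Rightarrow> real"
    and gamma1 gamma2 beta BQ1 BQ2 kappa1 kappa2 kappa12 kappamu kappa12S :: real
  assumes rho1_dist: "is_dist rho1" and rho2_dist: "is_dist rho2"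
    and rho1_pos: "\<forall>x. rho1 x > 0" and rho2_pos: "\<forall>x. rho2 x > 0"
    and rho1S_dist: "is_dist rho1S" and pib1_pol: "is_policy pib1"
    and rho1_fact: "\<forall>s a. rho1 (s,a) = rho1S s * pib1 s a"
    and mu_pol: "is_policy mu" and pi2_pol: "is_policy pi2"
    and P1_ker: "is_kernel P1" and P2_ker: "is_kernel P2"
    and g1: "0 \<le> gamma1" "gamma1 < 1" and g2: "0 \<le> gamma2" "gamma2 < 1"
    and beta: "0 \<le> beta"
    and BQ1: "sup_norm q1 \<le> BQ1" and BQ2: "sup_norm q2 \<le> BQ2"
    and k2: "sup_norm (\<lambda>x. occ gamma2 (P_op P2 pi2) rho2 x / rho2 x) \<le> kappa2"
    and k1: "sup_norm (\<lambda>x. occ gamma1 (P_op P1 mu) rho1 x / rho1 x) \<le> kappa1"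
    and k12: "sup_norm (\<lambda>x. occ gamma2 (P_op P2 pi2) rho2 x / rho1 x) \<le> kappa12"
    and kmu: "sup_norm (\<lambda>(s,a). mu s a / pib1 s a) \<le> kappamu"
    and k12S: "sup_norm (\<lambda>s. marg (occ gamma2 (P_op P2 pi2) rho2) s / rho1S s) \<le> kappa12S"
  shows
    "let L2 = (\<lambda>x. resolvent gamma2 (P_op P2 pi2) (\<lambda>y. rho2 y * q2 y) x / rho2 x);
         L1mod = (\<lambda>x. resolvent gamma1 (P_op P1 mu) (\<lambda>y. rho1 y * q1 y) x / rho1 x);
         L1cross = (\<lambda>x. resolvent gamma1 (P_op P1 mu)
                      (transp (\<lambda>h y. h y - Pi_op mu h y) (\<lambda>y. rho2 y * L2 y)) x / rho1 x);
         L1coup = (\<lambda>x. beta * L1mod x + L1cross x)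
     in (\<forall>l. (\<forall>h. ip rho2 l (\<lambda>x. h x - gamma2 * P_op P2 pi2 h x) = ip rho2 q2 h)
              \<longleftrightarrow> l = L2)
      \<and> (\<forall>l. (\<forall>h. ip rho1 l (\<lambda>x. h x - gamma1 * P_op P1 mu h x) = ip rho1 q1 h)
              \<longleftrightarrow> l = L1mod)
      \<and> (\<forall>l. (\<forall>h. ip rho1 l (\<lambda>x. h x - gamma1 * P_op P1 mu h x)
                   = beta * ip rho1 q1 h + ip rho2 L2 (\<lambda>x. h x - Pi_op mu h x))
              \<longleftrightarrow> l = L1coup)
      \<and> sup_norm L2 \<le> kappa2 / (1 - gamma2) * BQ2
      \<and> sup_norm L1mod \<le> kappa1 / (1 - gamma1) * BQ1
      \<and> sup_norm L1coup \<le> beta * (kappa1 / (1 - gamma1)) * BQ1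
          + kappa1 * (kappa12 + kappamu * kappa12S) / ((1 - gamma1) * (1 - gamma2)) * BQ2"
proof -
  have M1: "stochastic (sa_kernel P1 mu)" and M2: "stochastic (sa_kernel P2 pi2)"
    using P1_ker P2_ker mu_pol pi2_pol by (simp_all add: stochastic_sa_kernel)
  define L2 where "L2 = (\<lambda>x. resolvent gamma2 (P_op P2 pi2) (\<lambda>y. rho2 y * q2 y) x / rho2 x)"
  define L1mod where "L1mod = (\<lambda>x. resolvent gamma1 (P_op P1 mu) (\<lambda>y. rho1 y * q1 y) x / rho1 x)"
  define L1cross where "L1cross = (\<lambda>x. resolvent gamma1 (P_op P1 mu)
    (transp (\<lambda>h y. h y - Pi_op mu h y) (\<lambda>y. rho2 y * L2 y)) x / rho1 x)"
  have "(\<lambda>y. rho2 y * L2 y) = resolvent gamma2 (P_op P2 pi2) (\<lambda>y. rho2 y * q2 y)"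
    using rho2_pos by (simp add: L2_def fun_eq_iff less_imp_neq[symmetric])
  then have cross_source: "\<bar>transp (\<lambda>h y. h y - Pi_op mu h y) (\<lambda>y. rho2 y * L2 y) x\<bar>
      \<le> BQ2 / (1 - gamma2) * (kappa12 + kappamu * kappa12S) * rho1 x" for x
    using abs_cross_source_le[OF P2_ker pi2_pol g2 rho2_pos BQ2 rho1S_dist pib1_pol mu_pol rho1_pos
        rho1_fact k12 k12S kmu] by simp
  have L1mod_bound: "sup_norm L1mod \<le> kappa1 / (1 - gamma1) * BQ1"
    using sup_norm_resolvent_div_le[OF M1 g1 rho1_pos abs_mult_le_sup_norm[OF BQ1 rho1_pos]] k1
    unfolding L1mod_def P_op_eq_mat_op .
  have "sup_norm L1cross
      \<le> kappa1 / (1 - gamma1) * (BQ2 / (1 - gamma2) * (kappa12 + kappamu * kappa12S))"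
    using sup_norm_resolvent_div_le[OF M1 g1 rho1_pos cross_source] k1
    unfolding L1cross_def P_op_eq_mat_op .
  then have L1coup_bound: "sup_norm (\<lambda>x. beta * L1mod x + L1cross x)
      \<le> beta * (kappa1 / (1 - gamma1)) * BQ1
        + kappa1 * (kappa12 + kappamu * kappa12S) / ((1 - gamma1) * (1 - gamma2)) * BQ2"
    using sup_norm_scaled_add_le[OF beta, of L1mod L1cross] mult_left_mono[OF L1mod_bound beta]
    by (simp add: field_simps)
  show ?thesis
    using adjoint_equation_iff[OF M2 g2 rho2_pos, folded P_op_eq_mat_op, of _ "\<lambda>y. rho2 y * q2 y"]
      adjoint_equation_iff[OF M1 g1 rho1_pos, folded P_op_eq_mat_op, of _ "\<lambda>y. rho1 y * q1 y"]
      coupled_adjoint_equation_iff[OF M1 g1 rho1_pos, folded P_op_eq_mat_op,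
        of _ beta q1 rho2 L2 "id_minus_Pi_mat mu", folded id_minus_Pi_op_eq_mat_op]
      sup_norm_resolvent_div_le[OF M2 g2 rho2_pos abs_mult_le_sup_norm[OF BQ2 rho2_pos],
        folded P_op_eq_mat_op]
      k2 L1mod_bound L1coup_bound
    unfolding Let_def L2_def L1mod_def L1cross_def ip_eq_sum[of rho1 q1] ip_eq_sum[of rho2 q2]
    by auto
qed

end
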